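(* Assume $\sum_{i=1}^M b_i<1$ and let $\mathbf r^\star=\mathbf r^\star(\epsilon)$ be the energy-scarce solution defined in the context. Then, with $M$, $(w_i)$, $(b_i)$ fixed, as $\epsilon\to0^+$, $$\big|\bar\Delta(\mathbf r^\star)-\bar\Delta_{\mathrm{opt}}(\epsilon)\big|\le \epsilon\, C_2+o(\epsilon),\qquad C_2=\sum_{l=1}^M\frac{w_l}{b_l\big(1-\sum_{i=1}^M b_i\big)}\Big(3\sum_{i=1}^M b_i-\min_j b_j\Big).$$
   Context: Fix an integer $M\ge1$, weights $w_1,\dots,w_M>0$, constants $b_1,\dots,b_M>0$, and $\epsilon>0$. For $\mathbf r\in(0,\infty)^M$ write $S(\mathbf r)=\sum_{i=1}^M r_i$ and define $$\bar\Delta(\mathbf r)=\sum_{l=1}^M \frac{w_l e^{-r_l\epsilon}}{r_l}\, e^{\epsilon S(\mathbf r)}\big(1+S(\mathbf r)\big)+\sum_{l=1}^M w_l,\qquad \sigma_l(\mathbf r)=\frac{(1-e^{-r_l\epsilon})S(\mathbf r)+r_le^{-r_l\epsilon}}{S(\mathbf r)+1}.$$ Problem 1: minimize $\bar\Delta(\mathbf r)$ over $\mathbf r\in(0,\infty)^M$ subject to $\sigma_l(\mathbf r)\le b_l$ for all $l$; its optimal (infimum) value is $\bar\Delta_{\mathrm{opt}}(\epsilon)$. Energy-scarce solution (when $B:=\sum_i b_i<1$): for each $l$ let $$c_l=\frac{2b_l(1-B)^2}{b_l(1-B)^2+\sqrt{b_l^2(1-B)^4+4b_l^2(1-B)^2(B-b_l)\epsilon}},$$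 let $x^\star=\frac{\min_l c_l}{1-B}$, $\beta^\star=\sum_{i=1}^M \frac{1}{\sqrt{w_i}}$, and set $r^\star_l=\min\{b_l,\beta^\star\sqrt{w_l}\}\,x^\star$ (which equals $b_l x^\star$). *)

theory Defs
  imports "HOL-Analysis.Analysis" "HOL-Library.Landau_Symbols"
begin

text \<open>Indices range over {1..M}; vectors r are functions nat => real, only their
values on {1..M} matter.\<close>

definition Ssum :: "nat \<Rightarrow> (nat \<Rightarrow> real) \<Rightarrow> real" where
  "Ssum M r = (\<Sum>i=1..M. r i)"

definition Delta_bar :: "nat \<Rightarrow> (nat \<Rightarrow> real) \<Rightarrow> real \<Rightarrow> (nat \<Rightarrow> real) \<Rightarrow> real" where
  "Delta_bar M w \<epsilon> r =
     (\<Sum>l=1..M. w l * exp (- r l * \<epsilon>) / r l * exp (\<epsilon> * Ssum M r) * (1 + Ssum M r))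
     + (\<Sum>l=1..M. w l)"

definition sigma :: "nat \<Rightarrow> real \<Rightarrow> (nat \<Rightarrow> real) \<Rightarrow> nat \<Rightarrow> real" where
  "sigma M \<epsilon> r l =
     ((1 - exp (- r l * \<epsilon>)) * Ssum M r + r l * exp (- r l * \<epsilon>)) / (Ssum M r + 1)"

definition feasible :: "nat \<Rightarrow> (nat \<Rightarrow> real) \<Rightarrow> real \<Rightarrow> (nat \<Rightarrow> real) \<Rightarrow> bool" where
  "feasible M b \<epsilon> r \<longleftrightarrow> (\<forall>l\<in>{1..M}. 0 < r l \<and> sigma M \<epsilon> r l \<le> b l)"

definition Delta_opt :: "nat \<Rightarrow> (nat \<Rightarrow> real) \<Rightarrow> (nat \<Rightarrow> real) \<Rightarrow> real \<Rightarrow> real" where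
  "Delta_opt M w b \<epsilon> = (INF r \<in> {r. feasible M b \<epsilon> r}. Delta_bar M w \<epsilon> r)"

definition c_coef :: "nat \<Rightarrow> (nat \<Rightarrow> real) \<Rightarrow> real \<Rightarrow> nat \<Rightarrow> real" where
  "c_coef M b \<epsilon> l = (let B = (\<Sum>i=1..M. b i) in
     2 * b l * (1 - B)^2 /
     (b l * (1 - B)^2 + sqrt ((b l)^2 * (1 - B)^4 + 4 * (b l)^2 * (1 - B)^2 * (B - b l) * \<epsilon>)))"

definition x_star :: "nat \<Rightarrow> (nat \<Rightarrow> real) \<Rightarrow> real \<Rightarrow> real" where
  "x_star M b \<epsilon> = Min (c_coef M b \<epsilon> ` {1..M}) / (1 - (\<Sum>i=1..M. b i))"

definition beta_star :: "nat \<Rightarrow> (nat \<Rightarrow> real) \<Rightarrow> real" where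
  "beta_star M w = (\<Sum>i=1..M. 1 / sqrt (w i))"

definition r_star :: "nat \<Rightarrow> (nat \<Rightarrow> real) \<Rightarrow> (nat \<Rightarrow> real) \<Rightarrow> real \<Rightarrow> nat \<Rightarrow> real" where
  "r_star M w b \<epsilon> l = min (b l) (beta_star M w * sqrt (w l)) * x_star M b \<epsilon>"

definition C2 :: "nat \<Rightarrow> (nat \<Rightarrow> real) \<Rightarrow> (nat \<Rightarrow> real) \<Rightarrow> real" where
  "C2 M w b = (\<Sum>l=1..M. w l / (b l * (1 - (\<Sum>i=1..M. b i)))
                 * (3 * (\<Sum>i=1..M. b i) - Min (b ` {1..M})))"

end

theory Submission
  imports Defs
begin

text \<open>
  Every feasible \<open>r\<close> satisfies \<open>r\<^sub>l \<le> b\<^sub>l (1 + S(r))\<close>, since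
  \<open>\<sigma>\<^sub>l(r) \<ge> r\<^sub>l / (S(r) + 1)\<close>; as the exponential factors in \<open>\<Delta>\<close> are at least \<open>1\<close>,
  this gives the \<open>\<epsilon>\<close>-independent lower bound \<open>\<Sum> w\<^sub>l / b\<^sub>l + \<Sum> w\<^sub>l \<le> \<Delta>_opt(\<epsilon>)\<close>.
  The energy-scarce point is \<open>r\<^sup>\<star> = x b\<close>, where \<open>x\<close> is the smallest of the positive roots of
  \<open>(B - b\<^sub>l) \<epsilon> y\<^sup>2 + (1 - B) y = 1\<close>; this quadratic inequality is exactly what makes
  \<open>r\<^sup>\<star>\<close> feasible once \<open>exp (-b\<^sub>l x \<epsilon>) \<ge> 1 - b\<^sub>l x \<epsilon>\<close> is used. Bounding \<open>1/x\<close> by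
  \<open>1 - B + (B - min b) \<epsilon> / (1 - B)\<close> and \<open>exp u (1 + u)\<close> by \<open>1 + 2u + 3u\<^sup>2\<close> shows that
  \<open>\<Delta>(r\<^sup>\<star>)\<close> exceeds the lower bound by at most \<open>\<epsilon> C\<^sub>2\<close> for small \<open>\<epsilon>\<close>, so the
  \<open>o(\<epsilon>)\<close> term can even be taken to be zero.
\<close>

lemma exp_mult_one_plus_le:
  fixes u :: real
  assumes "0 \<le> u" "u \<le> 1"
  shows "exp u * (1 + u) \<le> 1 + 2*u + 3*u\<^sup>2"
proof -
  have "exp u * (1 + u) \<le> (1 + u + u\<^sup>2) * (1 + u)"
    using exp_bound[OF assms] assms by (intro mult_right_mono) auto
  moreover have "u * u\<^sup>2 \<le> u\<^sup>2"
    using assms by (intro mult_left_le_one_le) auto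
  ultimately show ?thesis
    by (simp add: algebra_simps power2_eq_square)
qed

lemma sqrt_square_add_le:
  fixes a t :: real
  assumes "a > 0" "t \<ge> 0"
  shows "sqrt (a\<^sup>2 + t) \<le> a + t / (2*a)"
proof (rule real_le_lsqrt)
  show "0 \<le> a + t / (2*a)"
    using assms by simp
  have "(a + t / (2*a))\<^sup>2 = a\<^sup>2 + t + (t / (2*a))\<^sup>2"
    using assms by (simp add: power2_eq_square field_simps)
  then show "a\<^sup>2 + t \<le> (a + t / (2*a))\<^sup>2"
    by simp
qed

definition quad_root :: "real \<Rightarrow> real \<Rightarrow> real" where
  "quad_root a q = 2 / (a + sqrt (a\<^sup>2 + 4*q))"

lemma quad_root_pos: "a > 0 \<Longrightarrow> q \<ge> 0 \<Longrightarrow> quad_root a q > 0"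
  by (simp add: quad_root_def add_pos_nonneg)

lemma quad_root_equation:
  assumes "a > 0" "q \<ge> 0"
  shows "q * (quad_root a q)\<^sup>2 + a * quad_root a q = 1"
proof -
  define s where "s = sqrt (a\<^sup>2 + 4*q)"
  define d where "d = a + s"
  have d_pos: "d > 0"
    using assms by (simp add: d_def s_def add_pos_nonneg)
  have "q * (2 / d)\<^sup>2 + a * (2 / d) = (4*q + 2*a*d) / d\<^sup>2"
    using d_pos by (simp add: field_simps power2_eq_square)
  also have "4*q + 2*a*d = d\<^sup>2"
    using assms by (simp add: d_def s_def power2_eq_square algebra_simps)
  finally have "q * (2 / d)\<^sup>2 + a * (2 / d) = 1"
    using d_pos by simp
  then show ?thesis
    unfolding quad_root_def s_def[symmetric] d_def[symmetric] .
qed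

lemma inverse_quad_root_bounds:
  assumes "a > 0" "q \<ge> 0"
  shows "a \<le> 1 / quad_root a q" "1 / quad_root a q \<le> a + q / a"
proof -
  have inv: "1 / quad_root a q = (a + sqrt (a\<^sup>2 + 4*q)) / 2"
    by (simp add: quad_root_def)
  have "a \<le> sqrt (a\<^sup>2 + 4*q)"
    using assms by (intro real_le_rsqrt) auto
  then show "a \<le> 1 / quad_root a q"
    unfolding inv by simp
  have "sqrt (a\<^sup>2 + 4*q) \<le> a + 4*q / (2*a)"
    using assms by (intro sqrt_square_add_le) auto
  then show "1 / quad_root a q \<le> a + q / a"
    unfolding inv using assms by (simp add: field_simps)
qed

lemma Ssum_scaled:
  assumes "\<forall>i\<in>{1..M}. r i = b i * x"
  shows "Ssum M r = (\<Sum>i=1..M. b i) * x"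
  unfolding Ssum_def sum_distrib_right using assms by (intro sum.cong) auto

lemma sigma_scaled_le:
  fixes M :: nat and b r :: "nat \<Rightarrow> real" and x \<epsilon> :: real
  defines "B \<equiv> \<Sum>i=1..M. b i"
  assumes r: "\<forall>i\<in>{1..M}. r i = b i * x" and l: "l \<in> {1..M}"
    and x: "x > 0" and bl: "0 < b l" "b l \<le> B"
    and quadratic: "(B - b l) * \<epsilon> * x\<^sup>2 + (1 - B) * x \<le> 1"
  shows "sigma M \<epsilon> r l \<le> b l"
proof -
  define e where "e = exp (- (b l * x) * \<epsilon>)"
  have "(B - b l) * x * (1 - b l * x * \<epsilon>) \<le> (B - b l) * x * e"
    using exp_ge_add_one_self[of "- (b l * x) * \<epsilon>"] bl x
    by (intro mult_left_mono) (auto simp: e_def)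
  moreover have "0 \<le> b l * (1 - (B - b l) * \<epsilon> * x\<^sup>2 - (1 - B) * x)"
    using bl quadratic by simp
  ultimately have "(1 - e) * (B * x) + b l * x * e \<le> b l * (B * x + 1)"
    by (simp add: algebra_simps power2_eq_square)
  moreover have "B * x + 1 > 0"
    using bl x by (simp add: add_pos_pos)
  ultimately show ?thesis
    unfolding sigma_def Ssum_scaled[OF r] r[rule_format, OF l] B_def[symmetric] e_def[symmetric]
    by (simp add: pos_divide_le_eq)
qed

lemma feasible_le_mult_one_plus_Ssum:
  assumes "feasible M b \<epsilon> r" "\<epsilon> \<ge> 0" "l \<in> {1..M}"
  shows "r l \<le> b l * (1 + Ssum M r)"
proof -
  have r_pos: "\<forall>i\<in>{1..M}. r i > 0"
    using assms(1) unfolding feasible_def by auto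
  have rl: "0 < r l" "r l \<le> Ssum M r"
    unfolding Ssum_def using r_pos assms(3) by (auto intro!: member_le_sum simp: less_imp_le)
  then have S_pos: "0 < Ssum M r + 1"
    by linarith
  have "exp (- r l * \<epsilon>) \<le> 1"
    using rl assms(2) by simp
  then have "(1 - exp (- r l * \<epsilon>)) * (Ssum M r - r l) \<ge> 0"
    using rl by simp
  then have "r l / (Ssum M r + 1) \<le> sigma M \<epsilon> r l"
    unfolding sigma_def using S_pos by (intro divide_right_mono) (auto simp: algebra_simps)
  also have "\<dots> \<le> b l"
    using assms(1,3) unfolding feasible_def by auto
  finally show ?thesis
    using S_pos by (simp add: pos_divide_le_eq algebra_simps)
qed

lemma Delta_bar_lower_bound:
  assumes feasible: "feasible M b \<epsilon> r" and "\<epsilon> \<ge> 0"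
    and w: "\<forall>i\<in>{1..M}. w i \<ge> 0" and b: "\<forall>i\<in>{1..M}. b i > 0"
  shows "(\<Sum>l=1..M. w l / b l) + (\<Sum>l=1..M. w l) \<le> Delta_bar M w \<epsilon> r"
proof -
  define S where "S = Ssum M r"
  have "w l / b l \<le> w l * exp (- r l * \<epsilon>) / r l * exp (\<epsilon> * S) * (1 + S)"
    if l: "l \<in> {1..M}" for l
  proof -
    have rl: "0 < r l" "r l \<le> S"
      using feasible l unfolding feasible_def S_def Ssum_def
      by (auto intro!: member_le_sum simp: less_imp_le)
    have "1 / b l \<le> (1 + S) / r l"
      using feasible_le_mult_one_plus_Ssum[OF feasible \<open>\<epsilon> \<ge> 0\<close> l] b l rl
      by (simp add: field_simps S_def)
    moreover have "1 \<le> exp (\<epsilon> * (S - r l))"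
      using rl \<open>\<epsilon> \<ge> 0\<close> by simp
    ultimately have "w l * (1 * (1 / b l)) \<le> w l * (exp (\<epsilon> * (S - r l)) * ((1 + S) / r l))"
      using w b l by (intro mult_left_mono mult_mono) (auto simp: less_imp_le)
    then show ?thesis
      by (simp add: exp_diff exp_minus field_simps)
  qed
  then have "(\<Sum>l=1..M. w l / b l)
      \<le> (\<Sum>l=1..M. w l * exp (- r l * \<epsilon>) / r l * exp (\<epsilon> * S) * (1 + S))"
    by (intro sum_mono) auto
  then show ?thesis
    unfolding Delta_bar_def S_def by simp
qed

lemma abs_Delta_bar_minus_Delta_opt_le:
  assumes feasible: "feasible M b \<epsilon> r" and "\<epsilon> \<ge> 0"
    and w: "\<forall>i\<in>{1..M}. w i \<ge> 0" and b: "\<forall>i\<in>{1..M}. b i > 0"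
    and upper: "Delta_bar M w \<epsilon> r \<le> (\<Sum>l=1..M. w l / b l) + (\<Sum>l=1..M. w l) + c"
  shows "\<bar>Delta_bar M w \<epsilon> r - Delta_opt M w b \<epsilon>\<bar> \<le> c"
proof -
  note lower = Delta_bar_lower_bound[OF _ \<open>\<epsilon> \<ge> 0\<close> w b]
  have "bdd_below (Delta_bar M w \<epsilon> ` {r. feasible M b \<epsilon> r})"
    using lower by (intro bdd_belowI2) auto
  then have "Delta_opt M w b \<epsilon> \<le> Delta_bar M w \<epsilon> r"
    unfolding Delta_opt_def using feasible by (intro cInf_lower) auto
  moreover have "(\<Sum>l=1..M. w l / b l) + (\<Sum>l=1..M. w l) \<le> Delta_opt M w b \<epsilon>"
    unfolding Delta_opt_def using feasible lower by (intro cINF_greatest) auto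
  ultimately show ?thesis
    using upper by simp
qed

lemma Delta_bar_scaled_le:
  fixes M :: nat and w b r :: "nat \<Rightarrow> real" and x u \<epsilon> :: real
  defines "B \<equiv> \<Sum>i=1..M. b i"
  assumes r: "\<forall>i\<in>{1..M}. r i = b i * x" and x: "x > 0"
    and w: "\<forall>i\<in>{1..M}. w i \<ge> 0" and b: "\<forall>i\<in>{1..M}. b i > 0"
    and u: "0 \<le> u" "u \<le> 1" and inverse_x: "1 / x + B \<le> 1 + u"
    and exponent: "\<forall>l\<in>{1..M}. (B - b l) * x * \<epsilon> \<le> u"
  shows "Delta_bar M w \<epsilon> r \<le> (\<Sum>l=1..M. w l / b l) * (1 + 2*u + 3*u\<^sup>2) + (\<Sum>l=1..M. w l)"
proof -
  have "0 \<le> B"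
    unfolding B_def using b by (intro sum_nonneg) (auto simp: less_imp_le)
  have "w l * exp (- r l * \<epsilon>) / r l * exp (\<epsilon> * (B * x)) * (1 + B * x)
      \<le> w l / b l * (1 + 2*u + 3*u\<^sup>2)" if l: "l \<in> {1..M}" for l
  proof -
    have wb: "0 \<le> w l / b l"
      using w b l by (simp add: less_imp_le)
    have "w l * exp (- r l * \<epsilon>) / r l * exp (\<epsilon> * (B * x)) * (1 + B * x)
        = w l / b l * (exp ((B - b l) * x * \<epsilon>) * (1 / x + B))"
      using r l x b by (simp add: exp_minus exp_diff field_simps)
    also have "\<dots> \<le> w l / b l * (exp u * (1 + u))"
      using exponent l inverse_x wb x \<open>0 \<le> B\<close>
      by (intro mult_left_mono mult_mono) (auto simp: less_imp_le add_nonneg_nonneg)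
    also have "\<dots> \<le> w l / b l * (1 + 2*u + 3*u\<^sup>2)"
      using exp_mult_one_plus_le[OF u] wb by (rule mult_left_mono)
    finally show ?thesis .
  qed
  then have "(\<Sum>l=1..M. w l * exp (- r l * \<epsilon>) / r l * exp (\<epsilon> * (B * x)) * (1 + B * x))
      \<le> (\<Sum>l=1..M. w l / b l * (1 + 2*u + 3*u\<^sup>2))"
    by (intro sum_mono) auto
  then show ?thesis
    unfolding Delta_bar_def Ssum_scaled[OF r] B_def[symmetric] sum_distrib_right by simp
qed

context
  fixes M :: nat and b :: "nat \<Rightarrow> real"
  assumes b_pos: "\<forall>i\<in>{1..M}. b i > 0"
    and sum_b_less_one: "(\<Sum>i=1..M. b i) < 1"
begin

private abbreviation (input) B where "B \<equiv> \<Sum>i=1..M. b i"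

lemma b_le_sum_b: "l \<in> {1..M} \<Longrightarrow> b l \<le> B"
  using b_pos by (intro member_le_sum) (auto simp: less_imp_le)

lemma c_coef_eq_quad_root:
  assumes "b l > 0"
  shows "c_coef M b \<epsilon> l = (1 - B) * quad_root (1 - B) ((B - b l) * \<epsilon>)"
proof -
  define a where "a = 1 - B"
  define s where "s = sqrt (a\<^sup>2 + 4 * ((B - b l) * \<epsilon>))"
  have a: "a > 0"
    using sum_b_less_one by (simp add: a_def)
  have "(b l)\<^sup>2 * a^4 + 4 * (b l)\<^sup>2 * a\<^sup>2 * (B - b l) * \<epsilon>
      = (b l * a)\<^sup>2 * (a\<^sup>2 + 4 * ((B - b l) * \<epsilon>))"
    by (simp add: algebra_simps power2_eq_square power4_eq_xxxx)
  then have "sqrt ((b l)\<^sup>2 * a^4 + 4 * (b l)\<^sup>2 * a\<^sup>2 * (B - b l) * \<epsilon>) = b l * a * s"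
    unfolding s_def using assms a by (simp add: real_sqrt_mult)
  then have "c_coef M b \<epsilon> l = (b l * a) * (2 * a) / ((b l * a) * (a + s))"
    unfolding c_coef_def Let_def a_def[symmetric] by (simp add: algebra_simps power2_eq_square)
  also have "\<dots> = a * quad_root a ((B - b l) * \<epsilon>)"
    unfolding quad_root_def s_def[symmetric] using assms a by simp
  finally show ?thesis
    unfolding a_def .
qed

lemma x_star_le_quad_root:
  assumes "l \<in> {1..M}"
  shows "x_star M b \<epsilon> \<le> quad_root (1 - B) ((B - b l) * \<epsilon>)"
proof -
  have "Min (c_coef M b \<epsilon> ` {1..M}) \<le> c_coef M b \<epsilon> l"
    using assms by simp
  then show ?thesis
    unfolding x_star_def c_coef_eq_quad_root[OF b_pos[rule_format, OF assms]]
    using sum_b_less_one by (simp add: pos_divide_le_eq mult.commute)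
qed

lemma x_star_eq_quad_root:
  assumes "M \<ge> 1"
  obtains l where "l \<in> {1..M}" "x_star M b \<epsilon> = quad_root (1 - B) ((B - b l) * \<epsilon>)"
proof -
  have "Min (c_coef M b \<epsilon> ` {1..M}) \<in> c_coef M b \<epsilon> ` {1..M}"
    using assms by (intro Min_in) auto
  then obtain l where l: "l \<in> {1..M}" "Min (c_coef M b \<epsilon> ` {1..M}) = c_coef M b \<epsilon> l"
    by auto
  then have "x_star M b \<epsilon> = quad_root (1 - B) ((B - b l) * \<epsilon>)"
    unfolding x_star_def c_coef_eq_quad_root[OF b_pos[rule_format, OF l(1)]]
    using sum_b_less_one by simp
  then show ?thesis
    using that l(1) by blast
qed

lemma x_star_pos:
  assumes "M \<ge> 1" "\<epsilon> \<ge> 0"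
  shows "x_star M b \<epsilon> > 0"
proof -
  obtain l where l: "l \<in> {1..M}" "x_star M b \<epsilon> = quad_root (1 - B) ((B - b l) * \<epsilon>)"
    using x_star_eq_quad_root[OF assms(1)] .
  show ?thesis
    unfolding l(2) using sum_b_less_one b_le_sum_b[OF l(1)] assms(2) by (intro quad_root_pos) auto
qed

lemma x_star_le:
  assumes "M \<ge> 1" "\<epsilon> \<ge> 0"
  shows "x_star M b \<epsilon> \<le> 1 / (1 - B)"
proof -
  obtain l where l: "l \<in> {1..M}" "x_star M b \<epsilon> = quad_root (1 - B) ((B - b l) * \<epsilon>)"
    using x_star_eq_quad_root[OF assms(1)] .
  have "1 - B \<le> 1 / x_star M b \<epsilon>"
    unfolding l(2) using sum_b_less_one b_le_sum_b[OF l(1)] assms(2)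
    by (intro inverse_quad_root_bounds) auto
  then show ?thesis
    using x_star_pos[OF assms] sum_b_less_one by (simp add: field_simps)
qed

lemma inverse_x_star_le:
  assumes "M \<ge> 1" "\<epsilon> \<ge> 0"
  shows "1 / x_star M b \<epsilon> \<le> (1 - B) + (B - Min (b ` {1..M})) * \<epsilon> / (1 - B)"
proof -
  obtain l where l: "l \<in> {1..M}" "x_star M b \<epsilon> = quad_root (1 - B) ((B - b l) * \<epsilon>)"
    using x_star_eq_quad_root[OF assms(1)] .
  have "1 / x_star M b \<epsilon> \<le> (1 - B) + (B - b l) * \<epsilon> / (1 - B)"
    unfolding l(2) using sum_b_less_one b_le_sum_b[OF l(1)] assms(2)
    by (intro inverse_quad_root_bounds) auto
  also have "\<dots> \<le> (1 - B) + (B - Min (b ` {1..M})) * \<epsilon> / (1 - B)"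
    using l(1) assms(2) sum_b_less_one by (intro add_left_mono divide_right_mono mult_right_mono) auto
  finally show ?thesis .
qed

lemma x_star_quadratic_le:
  assumes "l \<in> {1..M}" "\<epsilon> \<ge> 0"
  shows "(B - b l) * \<epsilon> * (x_star M b \<epsilon>)\<^sup>2 + (1 - B) * x_star M b \<epsilon> \<le> 1"
proof -
  define q where "q = (B - b l) * \<epsilon>"
  have q: "q \<ge> 0"
    unfolding q_def using b_le_sum_b[OF assms(1)] assms(2) by simp
  have x: "0 < x_star M b \<epsilon>" "x_star M b \<epsilon> \<le> quad_root (1 - B) q"
    using x_star_pos x_star_le_quad_root assms by (auto simp: q_def)
  have "q * (x_star M b \<epsilon>)\<^sup>2 + (1 - B) * x_star M b \<epsilon>
      \<le> q * (quad_root (1 - B) q)\<^sup>2 + (1 - B) * quad_root (1 - B) q"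
    using x q sum_b_less_one by (intro add_mono mult_left_mono power_mono) auto
  also have "\<dots> = 1"
    using q sum_b_less_one by (intro quad_root_equation) auto
  finally show ?thesis
    unfolding q_def .
qed

lemma r_star_eq:
  assumes w: "\<forall>i\<in>{1..M}. w i > 0" and l: "l \<in> {1..M}"
  shows "r_star M w b \<epsilon> l = b l * x_star M b \<epsilon>"
proof -
  have "w l > 0"
    using w l by simp
  then have "1 = sqrt (w l) / sqrt (w l)"
    by simp
  also have "\<dots> \<le> (\<Sum>i=1..M. sqrt (w l) / sqrt (w i))"
    using w l by (intro member_le_sum) (auto simp: less_imp_le)
  also have "\<dots> = beta_star M w * sqrt (w l)"
    unfolding beta_star_def sum_distrib_right by simp
  finally have "b l \<le> beta_star M w * sqrt (w l)"
    using b_le_sum_b[OF l] sum_b_less_one by linarith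
  then show ?thesis
    unfolding r_star_def by simp
qed

lemma r_star_feasible:
  assumes w: "\<forall>i\<in>{1..M}. w i > 0" and "\<epsilon> \<ge> 0"
  shows "feasible M b \<epsilon> (r_star M w b \<epsilon>)"
  unfolding feasible_def
proof
  fix l assume l: "l \<in> {1..M}"
  then have x: "x_star M b \<epsilon> > 0"
    using x_star_pos \<open>\<epsilon> \<ge> 0\<close> by simp
  have "sigma M \<epsilon> (r_star M w b \<epsilon>) l \<le> b l"
    using r_star_eq[OF w] l x b_pos b_le_sum_b x_star_quadratic_le[OF l \<open>\<epsilon> \<ge> 0\<close>]
    by (intro sigma_scaled_le) auto
  moreover have "0 < r_star M w b \<epsilon> l"
    using r_star_eq[OF w l] b_pos l x by simp
  ultimately show "0 < r_star M w b \<epsilon> l \<and> sigma M \<epsilon> (r_star M w b \<epsilon>) l \<le> b l"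
    by simp
qed

lemma Delta_bar_r_star_le:
  fixes \<epsilon> :: real
  defines "k \<equiv> (B + Min (b ` {1..M})) / (1 - B)"
    and "c \<equiv> (B - Min (b ` {1..M})) / (1 - B)"
  assumes w: "\<forall>i\<in>{1..M}. w i > 0" and "M \<ge> 1" and "\<epsilon> \<ge> 0"
    and small: "c * \<epsilon> \<le> 1" "3 * c\<^sup>2 * \<epsilon> \<le> k"
  shows "Delta_bar M w \<epsilon> (r_star M w b \<epsilon>)
    \<le> (\<Sum>l=1..M. w l / b l) + (\<Sum>l=1..M. w l) + \<epsilon> * C2 M w b"
proof -
  define bmin where "bmin = Min (b ` {1..M})"
  define x where "x = x_star M b \<epsilon>"
  have bmin: "bmin \<le> b l" "b l \<le> B" if "l \<in> {1..M}" for l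
    using that b_le_sum_b by (auto simp: bmin_def)
  have x: "0 < x" "x \<le> 1 / (1 - B)"
    using x_star_pos x_star_le assms by (auto simp: x_def)
  have "bmin \<le> B"
    using bmin[of 1] \<open>M \<ge> 1\<close> by simp
  then have c: "0 \<le> c"
    using sum_b_less_one by (simp add: c_def bmin_def)
  have "(B - b l) * x * \<epsilon> \<le> c * \<epsilon>" if l: "l \<in> {1..M}" for l
  proof -
    have "(B - b l) * x \<le> (B - bmin) * (1 / (1 - B))"
      using bmin[OF l] x by (intro mult_mono) auto
    then show ?thesis
      using \<open>\<epsilon> \<ge> 0\<close> by (intro mult_right_mono) (auto simp: c_def bmin_def)
  qed
  moreover have "1 / x + B \<le> 1 + c * \<epsilon>"
    using inverse_x_star_le[OF \<open>M \<ge> 1\<close> \<open>\<epsilon> \<ge> 0\<close>] sum_b_less_one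
    by (simp add: x_def c_def field_simps)
  ultimately have "Delta_bar M w \<epsilon> (r_star M w b \<epsilon>)
      \<le> (\<Sum>l=1..M. w l / b l) * (1 + 2 * (c * \<epsilon>) + 3 * (c * \<epsilon>)\<^sup>2) + (\<Sum>l=1..M. w l)"
    using r_star_eq[OF w] x w b_pos c \<open>\<epsilon> \<ge> 0\<close> small(1)
    by (intro Delta_bar_scaled_le) (auto simp: x_def less_imp_le)
  also have "\<dots> \<le> (\<Sum>l=1..M. w l / b l) * (1 + 2 * (c * \<epsilon>) + \<epsilon> * k) + (\<Sum>l=1..M. w l)"
  proof -
    have "3 * (c * \<epsilon>)\<^sup>2 \<le> \<epsilon> * k"
      using mult_left_mono[OF small(2) \<open>\<epsilon> \<ge> 0\<close>] by (simp add: power2_eq_square algebra_simps)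
    moreover have "0 \<le> (\<Sum>l=1..M. w l / b l)"
      using w b_pos by (intro sum_nonneg) (auto simp: less_imp_le)
    ultimately show ?thesis
      by (intro add_right_mono mult_left_mono) auto
  qed
  also have "\<dots> = (\<Sum>l=1..M. w l / b l) + (\<Sum>l=1..M. w l) + \<epsilon> * C2 M w b"
  proof -
    have "(3 * y - z) / t = 2 * ((y - z) / t) + (y + z) / t" for y z t :: real
      by (simp add: diff_divide_distrib add_divide_distrib)
    then have ck: "(3 * B - bmin) / (1 - B) = 2 * c + k"
      unfolding c_def k_def bmin_def .
    have regroup: "w / (v * t) * s = w / v * (s / t)" for w v t s :: real
      by simp
    have "C2 M w b = (\<Sum>l=1..M. w l / b l * ((3 * B - bmin) / (1 - B)))"
      unfolding C2_def bmin_def[symmetric] by (simp only: regroup)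
    also have "\<dots> = (\<Sum>l=1..M. w l / b l) * (2 * c + k)"
      unfolding ck sum_distrib_right ..
    finally have "C2 M w b = (\<Sum>l=1..M. w l / b l) * (2 * c + k)" .
    then show ?thesis
      by (simp add: algebra_simps)
  qed
  finally show ?thesis .
qed

end

theorem theorem2:
  fixes M :: nat and w b :: "nat \<Rightarrow> real"
  assumes "M \<ge> 1"
    and "\<forall>i\<in>{1..M}. w i > 0"
    and "\<forall>i\<in>{1..M}. b i > 0"
    and "(\<Sum>i=1..M. b i) < 1"
  shows "\<exists>g :: real \<Rightarrow> real. g \<in> o[at_right 0](\<lambda>\<epsilon>. \<epsilon>) \<and>
           (\<forall>\<^sub>F \<epsilon> in at_right 0.
              \<bar>Delta_bar M w \<epsilon> (r_star M w b \<epsilon>) - Delta_opt M w b \<epsilon>\<bar> \<le> \<epsilon> * C2 M w b + g \<epsilon>)"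
proof -
  define B where "B = (\<Sum>i=1..M. b i)"
  define k where "k = (B + Min (b ` {1..M})) / (1 - B)"
  define c where "c = (B - Min (b ` {1..M})) / (1 - B)"
  have "0 < B"
    unfolding B_def using assms(1,3) by (intro sum_pos) auto
  moreover have "0 < Min (b ` {1..M})"
    using assms(1,3) by simp
  ultimately have "k > 0"
    unfolding k_def using assms(4) by (intro divide_pos_pos add_pos_pos) (auto simp: B_def)
  have lim: "((\<lambda>\<epsilon>. c * \<epsilon>) \<longlongrightarrow> 0) (at_right 0)" "((\<lambda>\<epsilon>. 3 * c\<^sup>2 * \<epsilon>) \<longlongrightarrow> 0) (at_right 0)"
    by (auto intro!: tendsto_eq_intros)
  have "\<forall>\<^sub>F \<epsilon> in at_right 0. c * \<epsilon> < 1" "\<forall>\<^sub>F \<epsilon> in at_right 0. 3 * c\<^sup>2 * \<epsilon> < k"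
    using order_tendstoD(2)[OF lim(1), of 1] order_tendstoD(2)[OF lim(2) \<open>k > 0\<close>] by auto
  then have "\<forall>\<^sub>F \<epsilon> in at_right 0.
      \<bar>Delta_bar M w \<epsilon> (r_star M w b \<epsilon>) - Delta_opt M w b \<epsilon>\<bar> \<le> \<epsilon> * C2 M w b"
    using eventually_at_right_less[of "0::real"]
  proof eventually_elim
    case (elim \<epsilon>)
    then show ?case
      using assms Delta_bar_r_star_le[OF assms(3,4) assms(2,1), of \<epsilon>]
      by (intro abs_Delta_bar_minus_Delta_opt_le r_star_feasible)
        (auto simp: k_def c_def B_def less_imp_le)
  qed
  then show ?thesis
    by (intro exI[of _ "\<lambda>_. 0"]) simp
qed

end
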